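(* Let $X$ be a reflexive complex Banach space and let $A$ be a positive self-adjoint operator from $X$ to $X^\ast$. Then there exist a Hilbert space $H$ and a densely defined linear operator $J$ from $H$ to $X^\ast$ such that $A=JJ^\ast$.
   Context: $X^\ast$ denotes the conjugate dual of $X$: the space of all continuous conjugate-linear functionals on $X$; $X$ is identified with $X^{\ast\ast}$. For $v\in X^\ast$, $x\in X$ write $(v,x):=v(x)$ and $(x,v):=\overline{v(x)}$. For a densely defined operator $A$ from $X$ to $X^\ast$: $A$ is positive if $(Ax,x)\ge0$ for all $x\in\operatorname{dom}A$; its adjoint $A^\ast$ (from $X$ to $X^\ast$) has domain $\{y\in X: x\mapsto(Ax,y)\text{ continuous on }\operatorname{dom}A\}$ and is determined by $(x,A^\ast y)=(Ax,y)$; $A$ is self-adjoint if $A=A^\ast$. For a Hilbert space $H$ with inner product $[\cdot,\cdot]$ (linear in the first variable) and a densely defined operator $J$ from $H$ to $X^\ast$, the adjoint $J^\ast$ is the operator from $X$ to $H$ with $\operatorname{dom}J^\ast=\{y\in X: h\mapsto (Jh,y)\text{ is continuous on }\operatorname{dom}J\}$ and $J^\ast y\in H$ determined by $[h,J^\ast y]=(Jh,y)$ for all $h\in\operatorname{dom}J$. $JJ^\ast$ denotes the composition with domain $\{y\in\operatorname{dom}J^\ast: J^\ast y\in\operatorname{dom}J\}$. *)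

theory Defs
  imports "HOL-Analysis.Analysis"
begin

class complex_normed_vector = real_normed_vector +
  fixes scaleC :: "complex \<Rightarrow> 'a \<Rightarrow> 'a"
  assumes scaleC_add_right: "scaleC a (x + y) = scaleC a x + scaleC a y"
    and scaleC_add_left: "scaleC (a + b) x = scaleC a x + scaleC b x"
    and scaleC_scaleC: "scaleC a (scaleC b x) = scaleC (a * b) x"
    and scaleC_one: "scaleC 1 x = x"
    and scaleR_scaleC: "scaleR r x = scaleC (complex_of_real r) x"
    and norm_scaleC: "norm (scaleC a x) = cmod a * norm x"

instantiation complex :: complex_normed_vector
begin
definition scaleC_complex :: "complex \<Rightarrow> complex \<Rightarrow> complex" where
  "scaleC_complex a x = a * x"
instance
  by standard (auto simp: scaleC_complex_def algebra_simps norm_mult scaleR_conv_of_real)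
end

definition conj_linear :: "('x::complex_normed_vector \<Rightarrow> complex) \<Rightarrow> bool" where
  "conj_linear f \<longleftrightarrow> (\<forall>x y. f (x + y) = f x + f y) \<and> (\<forall>c x. f (scaleC c x) = cnj c * f x)"

text \<open>X^*: continuous conjugate-linear functionals on X; vector operations pointwise.\<close>
definition cdual :: "('x::complex_normed_vector \<Rightarrow> complex) set" where
  "cdual = {f. conj_linear f \<and> continuous_on UNIV f}"

definition dual_norm :: "('x::complex_normed_vector \<Rightarrow> complex) \<Rightarrow> real" where
  "dual_norm f = onorm f"

text \<open>Reflexivity: every continuous conjugate-linear functional Phi on X^* is of the form
  v \<mapsto> (x, v) = cnj (v x) for some x in X.\<close>
definition reflexive_space :: "'x::complex_normed_vector itself \<Rightarrow> bool" where
  "reflexive_space (_::'x itself) \<longleftrightarrow>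
    (\<forall>\<Phi> :: ('x \<Rightarrow> complex) \<Rightarrow> complex.
      ((\<forall>v\<in>cdual. \<forall>w\<in>cdual. \<Phi> (\<lambda>z. v z + w z) = \<Phi> v + \<Phi> w) \<and>
       (\<forall>v\<in>cdual. \<forall>c. \<Phi> (\<lambda>z. c * v z) = cnj c * \<Phi> v) \<and>
       (\<forall>v\<in>cdual. \<forall>e>0. \<exists>d>0. \<forall>w\<in>cdual.
          dual_norm (\<lambda>z. w z - v z) < d \<longrightarrow> cmod (\<Phi> w - \<Phi> v) < e))
      \<longrightarrow> (\<exists>x::'x. \<forall>v\<in>cdual. \<Phi> v = cnj (v x)))"

definition csubspace :: "'x::complex_normed_vector set \<Rightarrow> bool" where
  "csubspace S \<longleftrightarrow> 0 \<in> S \<and> (\<forall>x\<in>S. \<forall>y\<in>S. x + y \<in> S) \<and> (\<forall>c. \<forall>x\<in>S. scaleC c x \<in> S)"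

definition dd_operator :: "'x::complex_normed_vector set \<Rightarrow> ('x \<Rightarrow> ('x \<Rightarrow> complex)) \<Rightarrow> bool" where
  "dd_operator D A \<longleftrightarrow> csubspace D \<and> closure D = UNIV \<and> (\<forall>x\<in>D. A x \<in> cdual) \<and>
     (\<forall>x\<in>D. \<forall>y\<in>D. A (x + y) = (\<lambda>z. A x z + A y z)) \<and>
     (\<forall>c. \<forall>x\<in>D. A (scaleC c x) = (\<lambda>z. c * A x z))"

definition positive_op :: "'x::complex_normed_vector set \<Rightarrow> ('x \<Rightarrow> ('x \<Rightarrow> complex)) \<Rightarrow> bool" where
  "positive_op D A \<longleftrightarrow> (\<forall>x\<in>D. Im (A x x) = 0 \<and> Re (A x x) \<ge> 0)"

definition adj_dom :: "'x::complex_normed_vector set \<Rightarrow> ('x \<Rightarrow> ('x \<Rightarrow> complex)) \<Rightarrow> 'x set" where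
  "adj_dom D A = {y. continuous_on D (\<lambda>x. A x y)}"

text \<open>A = A^*: same domain, and A^* y = A y, i.e. (x, A y) = cnj ((A y) x) = (A x)(y).\<close>
definition self_adjoint_op :: "'x::complex_normed_vector set \<Rightarrow> ('x \<Rightarrow> ('x \<Rightarrow> complex)) \<Rightarrow> bool" where
  "self_adjoint_op D A \<longleftrightarrow> adj_dom D A = D \<and> (\<forall>x\<in>D. \<forall>y\<in>D. cnj (A y x) = A x y)"

section \<open>Hilbert spaces (carried by functions 'i => complex with pointwise operations)\<close>

definition hnorm :: "(('i \<Rightarrow> complex) \<Rightarrow> ('i \<Rightarrow> complex) \<Rightarrow> complex) \<Rightarrow> ('i \<Rightarrow> complex) \<Rightarrow> real" where
  "hnorm ip f = sqrt (Re (ip f f))"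

definition hilbert_space :: "('i \<Rightarrow> complex) set \<Rightarrow> (('i \<Rightarrow> complex) \<Rightarrow> ('i \<Rightarrow> complex) \<Rightarrow> complex) \<Rightarrow> bool" where
  "hilbert_space H ip \<longleftrightarrow>
     (\<lambda>_. 0) \<in> H \<and> (\<forall>f\<in>H. \<forall>g\<in>H. (\<lambda>t. f t + g t) \<in> H) \<and> (\<forall>c. \<forall>f\<in>H. (\<lambda>t. c * f t) \<in> H) \<and>
     (\<forall>f\<in>H. \<forall>g\<in>H. \<forall>h\<in>H. ip (\<lambda>t. f t + g t) h = ip f h + ip g h) \<and>
     (\<forall>c. \<forall>f\<in>H. \<forall>g\<in>H. ip (\<lambda>t. c * f t) g = c * ip f g) \<and>
     (\<forall>f\<in>H. \<forall>g\<in>H. ip g f = cnj (ip f g)) \<and>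
     (\<forall>f\<in>H. Re (ip f f) \<ge> 0 \<and> (ip f f = 0 \<longleftrightarrow> f = (\<lambda>_. 0))) \<and>
     (\<forall>s::nat \<Rightarrow> ('i \<Rightarrow> complex). (\<forall>n. s n \<in> H) \<and>
        (\<forall>e>0. \<exists>N. \<forall>m\<ge>N. \<forall>n\<ge>N. hnorm ip (\<lambda>t. s m t - s n t) < e)
        \<longrightarrow> (\<exists>l\<in>H. \<forall>e>0. \<exists>N. \<forall>n\<ge>N. hnorm ip (\<lambda>t. s n t - l t) < e))"

definition dd_operator_H ::
  "('i \<Rightarrow> complex) set \<Rightarrow> (('i \<Rightarrow> complex) \<Rightarrow> ('i \<Rightarrow> complex) \<Rightarrow> complex) \<Rightarrow> ('i \<Rightarrow> complex) set
   \<Rightarrow> (('i \<Rightarrow> complex) \<Rightarrow> ('x::complex_normed_vector \<Rightarrow> complex)) \<Rightarrow> bool" where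
  "dd_operator_H H ip DJ J \<longleftrightarrow>
     DJ \<subseteq> H \<and> (\<lambda>_. 0) \<in> DJ \<and> (\<forall>f\<in>DJ. \<forall>g\<in>DJ. (\<lambda>t. f t + g t) \<in> DJ) \<and>
     (\<forall>c. \<forall>f\<in>DJ. (\<lambda>t. c * f t) \<in> DJ) \<and>
     (\<forall>h\<in>H. \<forall>e>0. \<exists>g\<in>DJ. hnorm ip (\<lambda>t. h t - g t) < e) \<and>
     (\<forall>h\<in>DJ. J h \<in> cdual) \<and>
     (\<forall>f\<in>DJ. \<forall>g\<in>DJ. J (\<lambda>t. f t + g t) = (\<lambda>z. J f z + J g z)) \<and>
     (\<forall>c. \<forall>f\<in>DJ. J (\<lambda>t. c * f t) = (\<lambda>z. c * J f z))"

definition adj_dom_H ::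
  "(('i \<Rightarrow> complex) \<Rightarrow> ('i \<Rightarrow> complex) \<Rightarrow> complex) \<Rightarrow> ('i \<Rightarrow> complex) set
   \<Rightarrow> (('i \<Rightarrow> complex) \<Rightarrow> ('x::complex_normed_vector \<Rightarrow> complex)) \<Rightarrow> 'x set" where
  "adj_dom_H ip DJ J = {y. \<forall>h\<in>DJ. \<forall>e>0. \<exists>d>0. \<forall>g\<in>DJ.
       hnorm ip (\<lambda>t. g t - h t) < d \<longrightarrow> cmod (J g y - J h y) < e}"

end

theory Submission
  imports Defs
begin

text \<open>
  The form \<open>(x, y) \<mapsto> (A x)(y)\<close> is a positive Hermitian sesquilinear form on \<open>dom A\<close>,
  and \<open>H\<close> is its Hilbert space completion. The completion is realised concretely: a sequence
  in \<open>dom A\<close> that is Cauchy for the seminorm \<open>sqrt ((A x)(x))\<close> is represented by the pointwise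
  limit of the functionals \<open>A x\<^sub>n\<close> on \<open>dom A\<close> (extended by 0), and two such sequences have the
  same limit exactly when their difference has seminorm tending to 0. \<open>J\<close> maps the class of
  \<open>x\<close> to \<open>A x\<close>, and \<open>J\<^sup>* y\<close> is the functional \<open>z \<mapsto> conj ((A z)(y))\<close>. If \<open>h \<mapsto> (J h, y)\<close>
  is continuous, then \<open>x \<mapsto> (A x)(y)\<close> is bounded by the seminorm, and a Riesz argument shows
  \<open>J\<^sup>* y \<in> H\<close>: a sequence minimising the form on the hyperplane \<open>(A x)(y) = 1\<close> is Cauchy by the
  parallelogram law, and its limit is orthogonal to the kernel. Self-adjointness of \<open>A\<close> then
  gives \<open>dom (J J\<^sup>*) = dom A\<close>.
\<close>

lemma scaleC_zero_left [simp]: "scaleC 0 (x::'a::complex_normed_vector) = 0"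
  using scaleR_scaleC[of 0 x] by simp

lemma scaleC_minus_one: "scaleC (-1) (x::'a::complex_normed_vector) = - x"
  using scaleR_scaleC[of "-1" x] by simp

lemma scaleC_minus_right: "scaleC c (- x::'a::complex_normed_vector) = - scaleC c x"
proof -
  have "scaleC c (- x) = scaleC c (scaleC (-1) x)" by (simp add: scaleC_minus_one)
  also have "\<dots> = scaleC (-1) (scaleC c x)" by (simp add: scaleC_scaleC)
  finally show ?thesis by (simp add: scaleC_minus_one)
qed

lemma scaleC_diff_right: "scaleC c (x - y::'a::complex_normed_vector) = scaleC c x - scaleC c y"
  using scaleC_add_right[of c x "-y"] by (simp add: scaleC_minus_right)

lemma csubspace_minus: "csubspace S \<Longrightarrow> x \<in> S \<Longrightarrow> - x \<in> S"
  unfolding csubspace_def by (metis scaleC_minus_one)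

lemma csubspace_diff: "csubspace S \<Longrightarrow> x \<in> S \<Longrightarrow> y \<in> S \<Longrightarrow> x - y \<in> S"
  using csubspace_minus[of S y] unfolding csubspace_def by (metis diff_conv_add_uminus)

lemma le_mult_if_quadratic_nonneg:
  fixes G a b :: real
  assumes "0 \<le> G" "0 \<le> b" and quadratic: "\<And>t. 0 \<le> a - 2*t*G + t\<^sup>2*G*b"
  shows "G \<le> a * b"
proof (cases "G = 0 \<or> b = 0")
  case True
  show ?thesis
  proof (cases "G = 0")
    case False
    with True have "0 \<le> a - 2*((\<bar>a\<bar>+1)/(2*G))*G" using quadratic[of "(\<bar>a\<bar>+1)/(2*G)"] by simp
    also have "\<dots> = a - (\<bar>a\<bar>+1)" using False by (simp add: field_simps)
    finally show ?thesis by simp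
  qed (use assms(2) quadratic[of 0] in simp)
next
  case False
  have "0 \<le> a - 2*(1/b)*G + (1/b)\<^sup>2*G*b" using quadratic .
  also have "\<dots> = a - G / b" using False by (simp add: field_simps power2_eq_square)
  finally show ?thesis using False assms(2) by (simp add: divide_le_eq mult.commute)
qed

lemma inverse_Suc_less: "0 < e \<Longrightarrow> \<exists>N. \<forall>k\<ge>N. inverse (real (Suc k)) < e"
  using order_tendstoD(2)[OF LIMSEQ_inverse_real_of_nat] by (simp add: eventually_sequentially)

lemma cmod_mult_self: "cmod z * cmod z = Re z * Re z + Im z * Im z"
  using cmod_power2[of z] by (simp add: power2_eq_square)

section \<open>Positive Hermitian forms\<close>

locale positive_hermitian_form =
  fixes D :: "'x::complex_normed_vector set" and A :: "'x \<Rightarrow> 'x \<Rightarrow> complex"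
  assumes subspace: "csubspace D"
    and add_left: "x \<in> D \<Longrightarrow> y \<in> D \<Longrightarrow> z \<in> D \<Longrightarrow> A (x + y) z = A x z + A y z"
    and scaleC_left: "x \<in> D \<Longrightarrow> z \<in> D \<Longrightarrow> A (scaleC c x) z = c * A x z"
    and hermitian: "x \<in> D \<Longrightarrow> y \<in> D \<Longrightarrow> A x y = cnj (A y x)"
    and nonneg: "x \<in> D \<Longrightarrow> 0 \<le> Re (A x x)"
begin

lemma zero_mem [simp]: "0 \<in> D"
  using subspace unfolding csubspace_def by simp

lemma add_mem [intro]: "x \<in> D \<Longrightarrow> y \<in> D \<Longrightarrow> x + y \<in> D"
  using subspace unfolding csubspace_def by simp

lemma scaleC_mem [intro]: "x \<in> D \<Longrightarrow> scaleC c x \<in> D"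
  using subspace unfolding csubspace_def by simp

lemma diff_mem [intro]: "x \<in> D \<Longrightarrow> y \<in> D \<Longrightarrow> x - y \<in> D"
  using csubspace_diff[OF subspace] .

lemma diff_left: "x \<in> D \<Longrightarrow> y \<in> D \<Longrightarrow> z \<in> D \<Longrightarrow> A (x - y) z = A x z - A y z"
  using add_left[of "x - y" y z] by (simp add: diff_mem)

lemma zero_left [simp]: "z \<in> D \<Longrightarrow> A 0 z = 0"
  using scaleC_left[of 0 z 0] by simp

lemma add_right: "x \<in> D \<Longrightarrow> y \<in> D \<Longrightarrow> z \<in> D \<Longrightarrow> A x (y + z) = A x y + A x z"
  using hermitian[of x "y + z"] hermitian[of x y] hermitian[of x z] add_left[of y z x]
  by (simp add: add_mem)

lemma scaleC_right: "x \<in> D \<Longrightarrow> z \<in> D \<Longrightarrow> A x (scaleC c z) = cnj c * A x z"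
  using hermitian[of x "scaleC c z"] hermitian[of x z] scaleC_left[of z x c]
  by (simp add: scaleC_mem)

lemma diff_right: "x \<in> D \<Longrightarrow> y \<in> D \<Longrightarrow> z \<in> D \<Longrightarrow> A x (y - z) = A x y - A x z"
  using add_right[of x "y - z" z] by (simp add: diff_mem)

lemma self_real: "x \<in> D \<Longrightarrow> A x x = complex_of_real (Re (A x x))"
  using hermitian[of x x] by (simp add: complex_eq_iff)

definition quad :: "'x \<Rightarrow> real" where "quad x = Re (A x x)"

definition snorm :: "'x \<Rightarrow> real" where "snorm x = sqrt (quad x)"

lemma quad_nonneg: "x \<in> D \<Longrightarrow> 0 \<le> quad x"
  unfolding quad_def by (rule nonneg)

lemma snorm_nonneg: "x \<in> D \<Longrightarrow> 0 \<le> snorm x"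
  unfolding snorm_def by (simp add: quad_nonneg)

lemma snorm_power2: "x \<in> D \<Longrightarrow> (snorm x)\<^sup>2 = quad x"
  unfolding snorm_def by (simp add: quad_nonneg)

lemma quad_zero [simp]: "quad 0 = 0"
  unfolding quad_def by simp

lemma snorm_zero [simp]: "snorm 0 = 0"
  unfolding snorm_def by simp

lemma expand_add_scaleC:
  assumes "x \<in> D" "y \<in> D"
  shows "A (x + scaleC l y) (x + scaleC l y) = A x x + cnj l * A x y + l * cnj (A x y) + l * cnj l * A y y"
proof -
  have "A (x + scaleC l y) (x + scaleC l y)
      = A x x + A x (scaleC l y) + (A (scaleC l y) x + A (scaleC l y) (scaleC l y))"
    using assms by (simp add: add_left add_right add_mem scaleC_mem)
  then show ?thesis
    using assms hermitian[OF assms(2,1)] by (simp add: scaleC_left scaleC_right scaleC_mem)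
qed

lemma quad_add_scaleC:
  assumes "x \<in> D" "z \<in> D"
  shows "quad (x + scaleC l z) = quad x + 2 * Re (cnj l * A x z) + (cmod l)\<^sup>2 * quad z"
  unfolding quad_def expand_add_scaleC[OF assms] using self_real[OF assms(2)]
  by (simp add: cmod_mult_self power2_eq_square algebra_simps)

lemma quad_scaleC: "x \<in> D \<Longrightarrow> quad (scaleC c x) = (cmod c)\<^sup>2 * quad x"
  using quad_add_scaleC[of 0 x c] by simp

lemma snorm_scaleC: "x \<in> D \<Longrightarrow> snorm (scaleC c x) = cmod c * snorm x"
  unfolding snorm_def by (simp add: quad_scaleC real_sqrt_mult)

lemma snorm_minus_commute: "x \<in> D \<Longrightarrow> y \<in> D \<Longrightarrow> snorm (x - y) = snorm (y - x)"
  using snorm_scaleC[of "y - x" "-1"] by (simp add: diff_mem scaleC_minus_one)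

lemma quad_add: "x \<in> D \<Longrightarrow> y \<in> D \<Longrightarrow> quad (x + y) = quad x + 2 * Re (A x y) + quad y"
  using quad_add_scaleC[of x y 1] by (simp add: scaleC_one)

lemma parallelogram:
  "x \<in> D \<Longrightarrow> y \<in> D \<Longrightarrow> quad (x + y) + quad (x - y) = 2 * quad x + 2 * quad y"
  using quad_add_scaleC[of x y 1] quad_add_scaleC[of x y "-1"]
  by (simp add: scaleC_one scaleC_minus_one)

theorem Cauchy_Schwarz_ineq:
  assumes "x \<in> D" "y \<in> D"
  shows "cmod (A x y) \<le> snorm x * snorm y"
proof -
  have "(cmod (A x y))\<^sup>2 \<le> quad x * quad y"
  proof (rule le_mult_if_quadratic_nonneg)
    fix t :: real
    have "0 \<le> quad (x + scaleC (- (complex_of_real t * A x y)) y)"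
      using assms by (intro quad_nonneg) auto
    also have "\<dots> = quad x - 2*t*(cmod (A x y))\<^sup>2 + t\<^sup>2*(cmod (A x y))\<^sup>2*quad y"
      unfolding quad_add_scaleC[OF assms]
      by (simp add: cmod_mult_self power2_eq_square algebra_simps)
    finally show "0 \<le> quad x - 2*t*(cmod (A x y))\<^sup>2 + t\<^sup>2*(cmod (A x y))\<^sup>2*quad y" .
  qed (use assms quad_nonneg in auto)
  then have "sqrt ((cmod (A x y))\<^sup>2) \<le> sqrt (quad x * quad y)" by (rule real_sqrt_le_mono)
  then show ?thesis unfolding snorm_def by (simp add: real_sqrt_mult)
qed

lemma snorm_triangle:
  assumes "x \<in> D" "y \<in> D"
  shows "snorm (x + y) \<le> snorm x + snorm y"
proof -
  have "Re (A x y) \<le> snorm x * snorm y"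
    using Cauchy_Schwarz_ineq[OF assms] complex_Re_le_cmod[of "A x y"] by linarith
  then have "quad (x + y) \<le> (snorm x + snorm y)\<^sup>2"
    using quad_add[OF assms] snorm_power2 assms by (simp add: power2_eq_square algebra_simps)
  then have "sqrt (quad (x + y)) \<le> sqrt ((snorm x + snorm y)\<^sup>2)" by (rule real_sqrt_le_mono)
  then show ?thesis unfolding snorm_def[of "x + y"] using snorm_nonneg assms by simp
qed

lemma snorm_diff_triangle:
  "x \<in> D \<Longrightarrow> y \<in> D \<Longrightarrow> z \<in> D \<Longrightarrow> snorm (x - z) \<le> snorm (x - y) + snorm (y - z)"
  using snorm_triangle[of "x - y" "y - z"] by (simp add: diff_mem)

section \<open>The completion\<close>

definition snorm_Cauchy :: "(nat \<Rightarrow> 'x) \<Rightarrow> bool" where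
  "snorm_Cauchy s \<longleftrightarrow> (\<forall>n. s n \<in> D) \<and> (\<forall>e>0. \<exists>N. \<forall>m\<ge>N. \<forall>n\<ge>N. snorm (s m - s n) < e)"

lemma snorm_CauchyD: "snorm_Cauchy s \<Longrightarrow> s n \<in> D"
  unfolding snorm_Cauchy_def by simp

lemma snorm_CauchyE:
  assumes "snorm_Cauchy s" "0 < e"
  obtains N where "\<And>m n. N \<le> m \<Longrightarrow> N \<le> n \<Longrightarrow> snorm (s m - s n) < e"
  using assms unfolding snorm_Cauchy_def by blast

lemma snorm_Cauchy_const: "x \<in> D \<Longrightarrow> snorm_Cauchy (\<lambda>_. x)"
  unfolding snorm_Cauchy_def by simp

lemma snorm_Cauchy_add:
  assumes s: "snorm_Cauchy s" and t: "snorm_Cauchy t"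
  shows "snorm_Cauchy (\<lambda>n. s n + t n)"
  unfolding snorm_Cauchy_def
proof (intro conjI allI impI)
  fix e :: real assume "0 < e"
  then have "0 < e / 2" by simp
  obtain N1 where N1: "\<And>m n. N1 \<le> m \<Longrightarrow> N1 \<le> n \<Longrightarrow> snorm (s m - s n) < e / 2"
    using snorm_CauchyE[OF s \<open>0 < e / 2\<close>] by blast
  obtain N2 where N2: "\<And>m n. N2 \<le> m \<Longrightarrow> N2 \<le> n \<Longrightarrow> snorm (t m - t n) < e / 2"
    using snorm_CauchyE[OF t \<open>0 < e / 2\<close>] by blast
  have "snorm (s m + t m - (s n + t n)) < e" if "max N1 N2 \<le> m" "max N1 N2 \<le> n" for m n
  proof -
    have "snorm (s m + t m - (s n + t n)) = snorm ((s m - s n) + (t m - t n))"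
      by (simp add: algebra_simps)
    also have "\<dots> \<le> snorm (s m - s n) + snorm (t m - t n)"
      using s t by (intro snorm_triangle diff_mem snorm_CauchyD)
    also have "\<dots> < e" using N1 N2 that by fastforce
    finally show ?thesis .
  qed
  then show "\<exists>N. \<forall>m\<ge>N. \<forall>n\<ge>N. snorm (s m + t m - (s n + t n)) < e" by blast
qed (use s t snorm_CauchyD in blast)

lemma snorm_Cauchy_scaleC:
  assumes s: "snorm_Cauchy s"
  shows "snorm_Cauchy (\<lambda>n. scaleC c (s n))"
  unfolding snorm_Cauchy_def
proof (intro conjI allI impI)
  fix e :: real assume "0 < e"
  then have "0 < e / (cmod c + 1)" by (simp add: add_nonneg_pos)
  then obtain N where N: "\<And>m n. N \<le> m \<Longrightarrow> N \<le> n \<Longrightarrow> snorm (s m - s n) < e / (cmod c + 1)"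
    using snorm_CauchyE[OF s] by blast
  have "snorm (scaleC c (s m) - scaleC c (s n)) < e" if "N \<le> m" "N \<le> n" for m n
  proof -
    have "snorm (scaleC c (s m) - scaleC c (s n)) = cmod c * snorm (s m - s n)"
      using s by (simp add: scaleC_diff_right[symmetric] snorm_scaleC diff_mem snorm_CauchyD)
    also have "\<dots> \<le> cmod c * (e / (cmod c + 1))"
      using N that by (intro mult_left_mono) (auto intro: less_imp_le)
    also have "\<dots> < e" using \<open>0 < e\<close> by (simp add: field_simps add_pos_nonneg)
    finally show ?thesis .
  qed
  then show "\<exists>N. \<forall>m\<ge>N. \<forall>n\<ge>N. snorm (scaleC c (s m) - scaleC c (s n)) < e" by blast
qed (use s snorm_CauchyD in blast)

lemma snorm_Cauchy_diff:
  "snorm_Cauchy s \<Longrightarrow> snorm_Cauchy t \<Longrightarrow> snorm_Cauchy (\<lambda>n. s n - t n)"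
  using snorm_Cauchy_add[OF _ snorm_Cauchy_scaleC[of t "-1"], of s] by (simp add: scaleC_minus_one)

lemma snorm_Cauchy_bounded:
  assumes s: "snorm_Cauchy s"
  obtains B where "0 < B" "\<And>n. snorm (s n) \<le> B"
proof -
  obtain N where N: "\<And>m n. N \<le> m \<Longrightarrow> N \<le> n \<Longrightarrow> snorm (s m - s n) < 1"
    using snorm_CauchyE[OF s zero_less_one] by blast
  define B where "B = (\<Sum>n\<le>N. snorm (s n)) + 1"
  have "snorm (s n) \<le> B" for n
  proof (cases "n \<le> N")
    case True
    then have "snorm (s n) \<le> (\<Sum>n\<le>N. snorm (s n))"
      using s by (intro member_le_sum[of n "{..N}" "\<lambda>n. snorm (s n)"]) (simp_all add: snorm_nonneg snorm_CauchyD)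
    then show ?thesis unfolding B_def by simp
  next
    case False
    have "snorm (s n) = snorm (s N + (s n - s N))" by simp
    also have "\<dots> \<le> snorm (s N) + snorm (s n - s N)"
      using s by (intro snorm_triangle diff_mem snorm_CauchyD)
    also have "\<dots> \<le> B"
      unfolding B_def using N[of n N] False s
      by (intro add_mono member_le_sum) (auto intro: snorm_nonneg snorm_CauchyD)
    finally show ?thesis .
  qed
  moreover have "0 < B"
    unfolding B_def using s by (intro add_nonneg_pos sum_nonneg snorm_nonneg snorm_CauchyD) simp_all
  ultimately show ?thesis using that by blast
qed

definition lim_form :: "(nat \<Rightarrow> 'x) \<Rightarrow> (nat \<Rightarrow> 'x) \<Rightarrow> complex" where
  "lim_form s t = lim (\<lambda>n. A (s n) (t n))"

definition lim_fun :: "(nat \<Rightarrow> 'x) \<Rightarrow> 'x \<Rightarrow> complex" where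
  "lim_fun s = (\<lambda>z. if z \<in> D then lim_form s (\<lambda>_. z) else 0)"

definition emb :: "'x \<Rightarrow> 'x \<Rightarrow> complex" where
  "emb x = (\<lambda>z. if z \<in> D then A x z else 0)"

lemma emb_zero [simp]: "emb 0 = (\<lambda>_. 0)"
  unfolding emb_def by (simp add: fun_eq_iff)

lemma emb_add: "x \<in> D \<Longrightarrow> y \<in> D \<Longrightarrow> (\<lambda>z. emb x z + emb y z) = emb (x + y)"
  unfolding emb_def by (simp add: fun_eq_iff add_left)

lemma emb_scaleC: "x \<in> D \<Longrightarrow> (\<lambda>z. c * emb x z) = emb (scaleC c x)"
  unfolding emb_def by (simp add: fun_eq_iff scaleC_left)

lemma lim_form_const [simp]: "lim_form (\<lambda>_. x) (\<lambda>_. y) = A x y"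
  unfolding lim_form_def by simp

lemma lim_form_tendsto:
  assumes s: "snorm_Cauchy s" and t: "snorm_Cauchy t"
  shows "(\<lambda>n. A (s n) (t n)) \<longlonglongrightarrow> lim_form s t"
proof -
  obtain B1 where B1: "0 < B1" "\<And>n. snorm (s n) \<le> B1" using snorm_Cauchy_bounded[OF s] by blast
  obtain B2 where B2: "0 < B2" "\<And>n. snorm (t n) \<le> B2" using snorm_Cauchy_bounded[OF t] by blast
  define B where "B = B1 + B2"
  have B: "0 < B" "\<And>n. snorm (s n) \<le> B" "\<And>n. snorm (t n) \<le> B"
    using B1 B2 unfolding B_def by (smt (verit))+
  have "Cauchy (\<lambda>n. A (s n) (t n))"
  proof (rule metric_CauchyI)
    fix e :: real assume e: "0 < e"
    then have "0 < e / (4 * B)" using B by simp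
    obtain N1 where N1: "\<And>m n. N1 \<le> m \<Longrightarrow> N1 \<le> n \<Longrightarrow> snorm (s m - s n) < e / (4 * B)"
      using snorm_CauchyE[OF s \<open>0 < e / (4 * B)\<close>] by blast
    obtain N2 where N2: "\<And>m n. N2 \<le> m \<Longrightarrow> N2 \<le> n \<Longrightarrow> snorm (t m - t n) < e / (4 * B)"
      using snorm_CauchyE[OF t \<open>0 < e / (4 * B)\<close>] by blast
    have "dist (A (s m) (t m)) (A (s n) (t n)) < e" if "max N1 N2 \<le> m" "max N1 N2 \<le> n" for m n
    proof -
      have mem: "s m \<in> D" "s n \<in> D" "t m \<in> D" "t n \<in> D" using s t by (auto intro: snorm_CauchyD)
      have "A (s m) (t m) - A (s n) (t n) = A (s m - s n) (t m) + A (s n) (t m - t n)"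
        using mem by (simp add: diff_left diff_right)
      then have "dist (A (s m) (t m)) (A (s n) (t n)) \<le> cmod (A (s m - s n) (t m)) + cmod (A (s n) (t m - t n))"
        by (simp add: dist_norm norm_triangle_ineq)
      also have "\<dots> \<le> snorm (s m - s n) * snorm (t m) + snorm (s n) * snorm (t m - t n)"
        using mem by (intro add_mono Cauchy_Schwarz_ineq diff_mem)
      also have "\<dots> \<le> e / (4 * B) * B + B * (e / (4 * B))"
        using N1 N2 that mem B \<open>0 < e / (4 * B)\<close>
        by (intro add_mono mult_mono) (auto intro: less_imp_le snorm_nonneg)
      also have "\<dots> = e / 2" using B by (simp add: field_simps)
      finally show ?thesis using e by simp
    qed
    then show "\<exists>M. \<forall>m\<ge>M. \<forall>n\<ge>M. dist (A (s m) (t m)) (A (s n) (t n)) < e" by blast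
  qed
  then show ?thesis unfolding lim_form_def by (simp add: Cauchy_convergent_iff convergent_LIMSEQ_iff)
qed

lemma lim_fun_tendsto: "snorm_Cauchy s \<Longrightarrow> z \<in> D \<Longrightarrow> (\<lambda>n. A (s n) z) \<longlonglongrightarrow> lim_fun s z"
  using lim_form_tendsto[OF _ snorm_Cauchy_const] unfolding lim_fun_def by simp

lemma lim_fun_const: "x \<in> D \<Longrightarrow> lim_fun (\<lambda>_. x) = emb x"
  unfolding lim_fun_def lim_form_def emb_def by (simp add: fun_eq_iff)

lemma lim_form_diag_tendsto:
  assumes s: "snorm_Cauchy s" and t: "snorm_Cauchy t"
  shows "(\<lambda>n. lim_fun s (t n) - A (s n) (t n)) \<longlonglongrightarrow> 0"
proof (rule LIMSEQ_I)
  fix r :: real assume r: "0 < r"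
  obtain B where B: "0 < B" "\<And>n. snorm (t n) \<le> B" using snorm_Cauchy_bounded[OF t] by blast
  have "0 < r / (2 * B)" using r B by simp
  then obtain N where N: "\<And>m n. N \<le> m \<Longrightarrow> N \<le> n \<Longrightarrow> snorm (s m - s n) < r / (2 * B)"
    using snorm_CauchyE[OF s] by blast
  have "norm (lim_fun s (t n) - A (s n) (t n) - 0) < r" if n: "N \<le> n" for n
  proof -
    have mem: "s m \<in> D" "t m \<in> D" for m using s t by (auto intro: snorm_CauchyD)
    have "cmod (A (s m) (t n) - A (s n) (t n)) \<le> r / 2" if m: "N \<le> m" for m
    proof -
      have "cmod (A (s m) (t n) - A (s n) (t n)) = cmod (A (s m - s n) (t n))"
        using mem by (simp add: diff_left)
      also have "\<dots> \<le> snorm (s m - s n) * snorm (t n)" using mem by (intro Cauchy_Schwarz_ineq diff_mem)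
      also have "\<dots> \<le> r / (2 * B) * B"
        using N[OF m n] mem B \<open>0 < r / (2 * B)\<close> by (intro mult_mono) (auto intro: snorm_nonneg)
      also have "\<dots> = r / 2" using B by simp
      finally show ?thesis .
    qed
    moreover have "(\<lambda>m. cmod (A (s m) (t n) - A (s n) (t n))) \<longlonglongrightarrow> cmod (lim_fun s (t n) - A (s n) (t n))"
      using s mem by (intro tendsto_norm tendsto_diff lim_fun_tendsto tendsto_const)
    ultimately have "cmod (lim_fun s (t n) - A (s n) (t n)) \<le> r / 2"
      by (intro LIMSEQ_le_const2) auto
    then show ?thesis using r by simp
  qed
  then show "\<exists>N. \<forall>n\<ge>N. norm (lim_fun s (t n) - A (s n) (t n) - 0) < r" by blast
qed

lemma lim_form_commute:
  assumes s: "snorm_Cauchy s" and t: "snorm_Cauchy t"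
  shows "lim_form t s = cnj (lim_form s t)"
proof -
  have "(\<lambda>n. A (t n) (s n)) \<longlonglongrightarrow> cnj (lim_form s t)"
    using tendsto_cnj[OF lim_form_tendsto[OF s t]] hermitian[OF snorm_CauchyD[OF t] snorm_CauchyD[OF s]]
    by simp
  then show ?thesis using lim_form_tendsto[OF t s] LIMSEQ_unique by blast
qed

lemma lim_form_cong_left:
  assumes s: "snorm_Cauchy s" and s': "snorm_Cauchy s'" and t: "snorm_Cauchy t"
    and eq: "lim_fun s = lim_fun s'"
  shows "lim_form s t = lim_form s' t"
proof -
  have "(\<lambda>n. (lim_fun s (t n) - A (s' n) (t n)) - (lim_fun s (t n) - A (s n) (t n))) \<longlonglongrightarrow> 0 - 0"
    using lim_form_diag_tendsto[OF s t] lim_form_diag_tendsto[OF s' t] eq by (intro tendsto_diff) auto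
  then have "(\<lambda>n. A (s n) (t n) - A (s' n) (t n)) \<longlonglongrightarrow> 0" by simp
  moreover have "(\<lambda>n. A (s n) (t n) - A (s' n) (t n)) \<longlonglongrightarrow> lim_form s t - lim_form s' t"
    using s s' t by (intro tendsto_diff lim_form_tendsto)
  ultimately show ?thesis using LIMSEQ_unique by fastforce
qed

lemma lim_form_cong:
  assumes "snorm_Cauchy s" "snorm_Cauchy s'" "lim_fun s = lim_fun s'"
    and "snorm_Cauchy t" "snorm_Cauchy t'" "lim_fun t = lim_fun t'"
  shows "lim_form s t = lim_form s' t'"
proof -
  have "lim_form s t = lim_form s' t" by (rule lim_form_cong_left) (use assms in auto)
  also have "\<dots> = cnj (lim_form t s')" using lim_form_commute[of t s'] assms by simp
  also have "lim_form t s' = lim_form t' s'" by (rule lim_form_cong_left) (use assms in auto)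
  also have "cnj \<dots> = lim_form s' t'" using lim_form_commute[of s' t'] assms by simp
  finally show ?thesis .
qed

lemma lim_fun_add:
  assumes s: "snorm_Cauchy s" and t: "snorm_Cauchy t"
  shows "lim_fun (\<lambda>n. s n + t n) = (\<lambda>z. lim_fun s z + lim_fun t z)"
proof
  fix z show "lim_fun (\<lambda>n. s n + t n) z = lim_fun s z + lim_fun t z"
  proof (cases "z \<in> D")
    case True
    have "(\<lambda>n. A (s n + t n) z) \<longlonglongrightarrow> lim_fun s z + lim_fun t z"
      using tendsto_add[OF lim_fun_tendsto[OF s True] lim_fun_tendsto[OF t True]] s t True
      by (simp add: add_left snorm_CauchyD)
    then show ?thesis using lim_fun_tendsto[OF snorm_Cauchy_add[OF s t] True] LIMSEQ_unique by blast
  qed (simp add: lim_fun_def)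
qed

lemma lim_fun_scaleC:
  assumes s: "snorm_Cauchy s"
  shows "lim_fun (\<lambda>n. scaleC c (s n)) = (\<lambda>z. c * lim_fun s z)"
proof
  fix z show "lim_fun (\<lambda>n. scaleC c (s n)) z = c * lim_fun s z"
  proof (cases "z \<in> D")
    case True
    have "(\<lambda>n. A (scaleC c (s n)) z) \<longlonglongrightarrow> c * lim_fun s z"
      using tendsto_mult[OF tendsto_const lim_fun_tendsto[OF s True]] s True
      by (simp add: scaleC_left snorm_CauchyD)
    then show ?thesis using lim_fun_tendsto[OF snorm_Cauchy_scaleC[OF s] True] LIMSEQ_unique by blast
  qed (simp add: lim_fun_def)
qed

lemma lim_fun_diff:
  "snorm_Cauchy s \<Longrightarrow> snorm_Cauchy t \<Longrightarrow> lim_fun (\<lambda>n. s n - t n) = (\<lambda>z. lim_fun s z - lim_fun t z)"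
  using lim_fun_add[OF _ snorm_Cauchy_scaleC[of t "-1"], of s] lim_fun_scaleC[of t "-1"]
  by (simp add: scaleC_minus_one)

lemma lim_fun_add_scaleC_right:
  assumes s: "snorm_Cauchy s" and "z \<in> D" "w \<in> D"
  shows "lim_fun s (z + scaleC a w) = lim_fun s z + cnj a * lim_fun s w"
proof -
  have "(\<lambda>n. A (s n) (z + scaleC a w)) \<longlonglongrightarrow> lim_fun s z + cnj a * lim_fun s w"
    using tendsto_add[OF lim_fun_tendsto[OF s] tendsto_mult[OF tendsto_const lim_fun_tendsto[OF s]]] assms
    by (simp add: add_right scaleC_right scaleC_mem snorm_CauchyD)
  then show ?thesis using lim_fun_tendsto[OF s] assms LIMSEQ_unique by blast
qed

lemma lim_form_add_left:
  assumes s: "snorm_Cauchy s" and t: "snorm_Cauchy t" and u: "snorm_Cauchy u"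
  shows "lim_form (\<lambda>n. s n + t n) u = lim_form s u + lim_form t u"
proof -
  have "(\<lambda>n. A (s n + t n) (u n)) \<longlonglongrightarrow> lim_form s u + lim_form t u"
    using tendsto_add[OF lim_form_tendsto[OF s u] lim_form_tendsto[OF t u]] s t u
    by (simp add: add_left snorm_CauchyD)
  then show ?thesis using lim_form_tendsto[OF snorm_Cauchy_add[OF s t] u] LIMSEQ_unique by blast
qed

lemma lim_form_scaleC_left:
  assumes s: "snorm_Cauchy s" and u: "snorm_Cauchy u"
  shows "lim_form (\<lambda>n. scaleC c (s n)) u = c * lim_form s u"
proof -
  have "(\<lambda>n. A (scaleC c (s n)) (u n)) \<longlonglongrightarrow> c * lim_form s u"
    using tendsto_mult[OF tendsto_const lim_form_tendsto[OF s u]] s u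
    by (simp add: scaleC_left snorm_CauchyD)
  then show ?thesis using lim_form_tendsto[OF snorm_Cauchy_scaleC[OF s] u] LIMSEQ_unique by blast
qed

lemma lim_form_self_nonneg:
  assumes s: "snorm_Cauchy s"
  shows "0 \<le> Re (lim_form s s)"
proof (rule LIMSEQ_le_const)
  show "(\<lambda>n. Re (A (s n) (s n))) \<longlonglongrightarrow> Re (lim_form s s)"
    using s by (intro tendsto_Re lim_form_tendsto)
qed (use s nonneg snorm_CauchyD in blast)

lemma snorm_tendsto: "snorm_Cauchy s \<Longrightarrow> (\<lambda>n. snorm (s n)) \<longlonglongrightarrow> sqrt (Re (lim_form s s))"
  unfolding snorm_def quad_def by (intro tendsto_real_sqrt tendsto_Re lim_form_tendsto)

lemma lim_fun_eq_0_if_lim_form_self_eq_0: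
  assumes s: "snorm_Cauchy s" and "lim_form s s = 0"
  shows "lim_fun s = (\<lambda>_. 0)"
proof
  fix z
  show "lim_fun s z = 0"
  proof (cases "z \<in> D")
    case True
    have "(\<lambda>n. A (s n) z) \<longlonglongrightarrow> 0"
    proof (rule Lim_null_comparison)
      show "\<forall>\<^sub>F n in sequentially. norm (A (s n) z) \<le> snorm (s n) * snorm z"
        using Cauchy_Schwarz_ineq s True by (intro always_eventually) (auto intro: snorm_CauchyD)
      show "(\<lambda>n. snorm (s n) * snorm z) \<longlonglongrightarrow> 0"
        using snorm_tendsto[OF s] assms(2) by (intro tendsto_mult_left_zero) simp
    qed
    then show ?thesis using lim_fun_tendsto[OF s True] LIMSEQ_unique by blast
  qed (simp add: lim_fun_def)
qed

definition completion :: "('x \<Rightarrow> complex) set" where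
  "completion = {lim_fun s | s. snorm_Cauchy s}"

definition Cauchy_repr :: "('x \<Rightarrow> complex) \<Rightarrow> nat \<Rightarrow> 'x" where
  "Cauchy_repr f = (SOME s. snorm_Cauchy s \<and> lim_fun s = f)"

definition completion_inner :: "('x \<Rightarrow> complex) \<Rightarrow> ('x \<Rightarrow> complex) \<Rightarrow> complex" where
  "completion_inner f g = lim_form (Cauchy_repr f) (Cauchy_repr g)"

abbreviation hdist :: "('x \<Rightarrow> complex) \<Rightarrow> ('x \<Rightarrow> complex) \<Rightarrow> real" where
  "hdist f g \<equiv> hnorm completion_inner (\<lambda>z. f z - g z)"

lemma completion_cases:
  assumes "f \<in> completion"
  obtains s where "snorm_Cauchy s" "f = lim_fun s"
  using assms unfolding completion_def by blast

lemma lim_fun_mem_completion: "snorm_Cauchy s \<Longrightarrow> lim_fun s \<in> completion"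
  unfolding completion_def by blast

lemma Cauchy_repr:
  assumes "snorm_Cauchy s"
  shows "snorm_Cauchy (Cauchy_repr (lim_fun s))" "lim_fun (Cauchy_repr (lim_fun s)) = lim_fun s"
  using someI[of "\<lambda>t. snorm_Cauchy t \<and> lim_fun t = lim_fun s" s] assms
  unfolding Cauchy_repr_def by auto

lemma completion_inner_lim_fun:
  "snorm_Cauchy s \<Longrightarrow> snorm_Cauchy t \<Longrightarrow> completion_inner (lim_fun s) (lim_fun t) = lim_form s t"
  unfolding completion_inner_def by (rule lim_form_cong) (simp_all add: Cauchy_repr)

lemma emb_mem_completion: "x \<in> D \<Longrightarrow> emb x \<in> completion"
  using lim_fun_mem_completion[OF snorm_Cauchy_const] by (simp add: lim_fun_const)

lemma snorm_diff_tendsto_hdist: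
  assumes s: "snorm_Cauchy s" and t: "snorm_Cauchy t"
  shows "(\<lambda>n. snorm (s n - t n)) \<longlonglongrightarrow> hdist (lim_fun s) (lim_fun t)"
  using snorm_tendsto[OF snorm_Cauchy_diff[OF s t]]
  by (simp add: hnorm_def lim_fun_diff[OF s t, symmetric] completion_inner_lim_fun snorm_Cauchy_diff[OF s t])

lemma hdist_emb: "x \<in> D \<Longrightarrow> y \<in> D \<Longrightarrow> hdist (emb x) (emb y) = snorm (x - y)"
  using snorm_diff_tendsto_hdist[OF snorm_Cauchy_const snorm_Cauchy_const, of x y]
  by (simp add: lim_fun_const LIMSEQ_const_iff)

lemma hdist_triangle:
  assumes "f \<in> completion" "g \<in> completion" "h \<in> completion"
  shows "hdist f h \<le> hdist f g + hdist g h"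
proof -
  obtain s t u where s: "snorm_Cauchy s" and t: "snorm_Cauchy t" and u: "snorm_Cauchy u"
    and "f = lim_fun s" "g = lim_fun t" "h = lim_fun u"
    using assms by (metis completion_cases)
  moreover have "snorm (s n - u n) \<le> snorm (s n - t n) + snorm (t n - u n)" for n
    using s t u by (intro snorm_diff_triangle snorm_CauchyD)
  ultimately show ?thesis
    using LIMSEQ_le[OF snorm_diff_tendsto_hdist[OF s u]
        tendsto_add[OF snorm_diff_tendsto_hdist[OF s t] snorm_diff_tendsto_hdist[OF t u]]]
    by blast
qed

lemma hdist_commute:
  assumes "f \<in> completion" "g \<in> completion"
  shows "hdist f g = hdist g f"
proof -
  obtain s t where st: "snorm_Cauchy s" "snorm_Cauchy t" and "f = lim_fun s" "g = lim_fun t"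
    using assms by (metis completion_cases)
  moreover have "(\<lambda>n. snorm (s n - t n)) = (\<lambda>n. snorm (t n - s n))"
    using st by (simp add: snorm_minus_commute snorm_CauchyD)
  ultimately show ?thesis using LIMSEQ_unique snorm_diff_tendsto_hdist by metis
qed

lemma hdist_lim_fun_emb_tendsto:
  assumes s: "snorm_Cauchy s"
  shows "(\<lambda>n. hdist (lim_fun s) (emb (s n))) \<longlonglongrightarrow> 0"
proof (rule LIMSEQ_I)
  fix r :: real assume "0 < r"
  then have "0 < r / 2" by simp
  then obtain N where N: "\<And>m n. N \<le> m \<Longrightarrow> N \<le> n \<Longrightarrow> snorm (s m - s n) < r / 2"
    using snorm_CauchyE[OF s] by blast
  have "norm (hdist (lim_fun s) (emb (s n)) - 0) < r" if n: "N \<le> n" for n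
  proof -
    have lim: "(\<lambda>m. snorm (s m - s n)) \<longlonglongrightarrow> hdist (lim_fun s) (emb (s n))"
      using snorm_diff_tendsto_hdist[OF s snorm_Cauchy_const] s by (simp add: lim_fun_const snorm_CauchyD)
    have "hdist (lim_fun s) (emb (s n)) \<le> r / 2"
      using N n by (intro LIMSEQ_le_const2[OF lim]) (auto intro: less_imp_le)
    moreover have "0 \<le> hdist (lim_fun s) (emb (s n))"
      using s by (intro LIMSEQ_le_const[OF lim]) (auto intro: snorm_nonneg snorm_CauchyD)
    ultimately show ?thesis using \<open>0 < r\<close> by simp
  qed
  then show "\<exists>N. \<forall>n\<ge>N. norm (hdist (lim_fun s) (emb (s n)) - 0) < r" by blast
qed

lemma emb_dense:
  assumes "f \<in> completion" "0 < e"
  shows "\<exists>x\<in>D. hdist f (emb x) < e"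
proof -
  obtain s where s: "snorm_Cauchy s" "f = lim_fun s" using assms(1) by (rule completion_cases)
  obtain N where "\<forall>n\<ge>N. norm (hdist (lim_fun s) (emb (s n)) - 0) < e"
    using LIMSEQ_D[OF hdist_lim_fun_emb_tendsto[OF s(1)] assms(2)] by blast
  then have "hdist f (emb (s N)) < e" using s(2) by (simp add: abs_less_iff)
  then show ?thesis using snorm_CauchyD[OF s(1)] by blast
qed

lemma snorm_Cauchy_if_close_to_Cauchy:
  assumes P: "\<And>n. P n \<in> completion"
    and Cauchy: "\<forall>e>0. \<exists>N. \<forall>m\<ge>N. \<forall>n\<ge>N. hdist (P m) (P n) < e"
    and x: "\<And>k. x k \<in> D" and close: "\<And>k. hdist (P k) (emb (x k)) < inverse (real (Suc k))"
  shows "snorm_Cauchy x"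
  unfolding snorm_Cauchy_def
proof (intro conjI allI impI x)
  fix e :: real assume "0 < e"
  then have "0 < e / 3" by simp
  obtain N1 where N1: "\<forall>k\<ge>N1. inverse (real (Suc k)) < e / 3"
    using inverse_Suc_less[OF \<open>0 < e / 3\<close>] by blast
  obtain N2 where N2: "\<forall>m\<ge>N2. \<forall>n\<ge>N2. hdist (P m) (P n) < e / 3"
    using Cauchy \<open>0 < e / 3\<close> by blast
  have "snorm (x m - x n) < e" if "max N1 N2 \<le> m" "max N1 N2 \<le> n" for m n
  proof -
    have "hdist (emb (x m)) (emb (x n)) \<le> hdist (emb (x m)) (P m) + hdist (P m) (emb (x n))"
      using P x by (intro hdist_triangle emb_mem_completion)
    moreover have "hdist (P m) (emb (x n)) \<le> hdist (P m) (P n) + hdist (P n) (emb (x n))"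
      using P x by (intro hdist_triangle emb_mem_completion)
    moreover have "hdist (emb (x m)) (P m) = hdist (P m) (emb (x m))"
      using P x by (intro hdist_commute emb_mem_completion)
    moreover have "hdist (emb (x m)) (emb (x n)) = snorm (x m - x n)"
      by (rule hdist_emb[OF x x])
    moreover have "inverse (real (Suc m)) < e / 3" "inverse (real (Suc n)) < e / 3"
      and "hdist (P m) (P n) < e / 3"
      using N1 N2 that by auto
    ultimately show ?thesis using close[of m] close[of n] by linarith
  qed
  then show "\<exists>N. \<forall>m\<ge>N. \<forall>n\<ge>N. snorm (x m - x n) < e" by blast
qed

lemma completion_complete:
  fixes P :: "nat \<Rightarrow> 'x \<Rightarrow> complex"
  assumes P: "\<And>n. P n \<in> completion"
    and Cauchy: "\<forall>e>0. \<exists>N. \<forall>m\<ge>N. \<forall>n\<ge>N. hdist (P m) (P n) < e"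
  shows "\<exists>l\<in>completion. \<forall>e>0. \<exists>N. \<forall>n\<ge>N. hdist (P n) l < e"
proof -
  have "\<forall>k. \<exists>x. x \<in> D \<and> hdist (P k) (emb x) < inverse (real (Suc k))"
  proof
    fix k show "\<exists>x. x \<in> D \<and> hdist (P k) (emb x) < inverse (real (Suc k))"
      using emb_dense[OF P[of k], of "inverse (real (Suc k))"] by auto
  qed
  from choice[OF this] obtain x
    where x: "\<And>k. x k \<in> D" and close: "\<And>k. hdist (P k) (emb (x k)) < inverse (real (Suc k))"
    by blast
  have x_Cauchy: "snorm_Cauchy x" using P Cauchy x close by (rule snorm_Cauchy_if_close_to_Cauchy)
  have "\<exists>N. \<forall>n\<ge>N. hdist (P n) (lim_fun x) < e" if "0 < e" for e
  proof -
    from that have "0 < e / 2" by simp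
    obtain N1 where N1: "\<forall>k\<ge>N1. inverse (real (Suc k)) < e / 2"
      using inverse_Suc_less[OF \<open>0 < e / 2\<close>] by blast
    obtain N2 where N2: "\<forall>n\<ge>N2. norm (hdist (lim_fun x) (emb (x n)) - 0) < e / 2"
      using LIMSEQ_D[OF hdist_lim_fun_emb_tendsto[OF x_Cauchy] \<open>0 < e / 2\<close>] by blast
    have "hdist (P n) (lim_fun x) < e" if "max N1 N2 \<le> n" for n
    proof -
      have "hdist (P n) (lim_fun x) \<le> hdist (P n) (emb (x n)) + hdist (emb (x n)) (lim_fun x)"
        using P x by (intro hdist_triangle emb_mem_completion lim_fun_mem_completion x_Cauchy)
      moreover have "hdist (emb (x n)) (lim_fun x) = hdist (lim_fun x) (emb (x n))"
        using x by (intro hdist_commute emb_mem_completion lim_fun_mem_completion x_Cauchy)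
      moreover have "inverse (real (Suc n)) < e / 2" "\<bar>hdist (lim_fun x) (emb (x n))\<bar> < e / 2"
        using N1 N2 that by auto
      ultimately show ?thesis using close[of n] by linarith
    qed
    then show ?thesis by blast
  qed
  then show ?thesis using lim_fun_mem_completion[OF x_Cauchy] by blast
qed

theorem hilbert_space_completion: "hilbert_space completion completion_inner"
  unfolding hilbert_space_def
proof (intro conjI ballI allI impI)
  show "(\<lambda>_. 0) \<in> completion"
    using emb_mem_completion[OF zero_mem] by simp
next
  fix f g assume "f \<in> completion" "g \<in> completion"
  then obtain s t where s: "snorm_Cauchy s" "f = lim_fun s" and t: "snorm_Cauchy t" "g = lim_fun t"
    by (metis completion_cases)
  show "(\<lambda>z. f z + g z) \<in> completion"
    using lim_fun_mem_completion[OF snorm_Cauchy_add[OF s(1) t(1)]] s t by (simp add: lim_fun_add)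
  show "completion_inner g f = cnj (completion_inner f g)"
    using s t by (simp add: completion_inner_lim_fun lim_form_commute[OF s(1) t(1)])
next
  fix c f assume "f \<in> completion"
  then obtain s where s: "snorm_Cauchy s" "f = lim_fun s" by (rule completion_cases)
  show "(\<lambda>z. c * f z) \<in> completion"
    using lim_fun_mem_completion[OF snorm_Cauchy_scaleC[OF s(1)]] s by (simp add: lim_fun_scaleC)
next
  fix f g h assume "f \<in> completion" "g \<in> completion" "h \<in> completion"
  then obtain s t u where s: "snorm_Cauchy s" "f = lim_fun s" and t: "snorm_Cauchy t" "g = lim_fun t"
    and u: "snorm_Cauchy u" "h = lim_fun u"
    by (metis completion_cases)
  show "completion_inner (\<lambda>z. f z + g z) h = completion_inner f h + completion_inner g h"
    using s t u snorm_Cauchy_add[OF s(1) t(1)]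
    by (simp add: lim_fun_add[symmetric] completion_inner_lim_fun lim_form_add_left)
next
  fix c f g assume "f \<in> completion" "g \<in> completion"
  then obtain s t where s: "snorm_Cauchy s" "f = lim_fun s" and t: "snorm_Cauchy t" "g = lim_fun t"
    by (metis completion_cases)
  show "completion_inner (\<lambda>z. c * f z) g = c * completion_inner f g"
    using s t snorm_Cauchy_scaleC[OF s(1)]
    by (simp add: lim_fun_scaleC[symmetric] completion_inner_lim_fun lim_form_scaleC_left)
next
  fix f assume "f \<in> completion"
  then obtain s where s: "snorm_Cauchy s" "f = lim_fun s" by (rule completion_cases)
  show "0 \<le> Re (completion_inner f f)"
    using s by (simp add: completion_inner_lim_fun lim_form_self_nonneg)
  show "completion_inner f f = 0 \<longleftrightarrow> f = (\<lambda>_. 0)"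
  proof
    assume "completion_inner f f = 0"
    then show "f = (\<lambda>_. 0)"
      using s lim_fun_eq_0_if_lim_form_self_eq_0 by (simp add: completion_inner_lim_fun)
  next
    assume "f = (\<lambda>_. 0)"
    then show "completion_inner f f = 0"
      using completion_inner_lim_fun[OF snorm_Cauchy_const snorm_Cauchy_const, of 0 0]
      by (simp add: lim_fun_const)
  qed
next
  fix P :: "nat \<Rightarrow> 'x \<Rightarrow> complex"
  assume "(\<forall>n. P n \<in> completion) \<and> (\<forall>e>0. \<exists>N. \<forall>m\<ge>N. \<forall>n\<ge>N. hdist (P m) (P n) < e)"
  then show "\<exists>l\<in>completion. \<forall>e>0. \<exists>N. \<forall>n\<ge>N. hdist (P n) l < e"
    using completion_complete by blast
qed

lemma completion_inner_emb_left:
  assumes t: "snorm_Cauchy t" and "x \<in> D"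
  shows "completion_inner (emb x) (lim_fun t) = cnj (lim_fun t x)"
proof -
  have "(\<lambda>n. A x (t n)) \<longlonglongrightarrow> cnj (lim_fun t x)"
    using tendsto_cnj[OF lim_fun_tendsto[OF t \<open>x \<in> D\<close>]] hermitian[OF \<open>x \<in> D\<close> snorm_CauchyD[OF t]]
    by simp
  moreover have "completion_inner (emb x) (lim_fun t) = lim_form (\<lambda>_. x) t"
    using completion_inner_lim_fun[OF snorm_Cauchy_const t] assms by (simp add: lim_fun_const)
  ultimately show ?thesis
    using lim_form_tendsto[OF snorm_Cauchy_const t] assms LIMSEQ_unique by auto
qed

section \<open>Riesz representation\<close>

lemma snorm_Cauchy_if_quad_minimizing:
  assumes x: "\<And>n. x n \<in> D" and mid: "\<And>m n. \<mu> \<le> quad (scaleC (1/2) (x m + x n))"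
    and lim: "(\<lambda>n. quad (x n)) \<longlonglongrightarrow> \<mu>"
  shows "snorm_Cauchy x"
  unfolding snorm_Cauchy_def
proof (intro conjI allI impI x)
  fix e :: real assume "0 < e"
  then obtain N where N: "\<And>n. N \<le> n \<Longrightarrow> quad (x n) < \<mu> + e\<^sup>2 / 4"
    using order_tendstoD(2)[OF lim, of "\<mu> + e\<^sup>2 / 4"] by (auto simp: eventually_sequentially)
  have "snorm (x m - x n) < e" if "N \<le> m" "N \<le> n" for m n
  proof -
    have "4 * \<mu> \<le> quad (x m + x n)"
      using mid[of m n] quad_scaleC[of "x m + x n" "1/2"] x by (simp add: add_mem power2_eq_square)
    then have "quad (x m - x n) < e\<^sup>2"
      using parallelogram[OF x x, of m n] N[OF that(1)] N[OF that(2)] by linarith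
    then have "sqrt (quad (x m - x n)) < sqrt (e\<^sup>2)" by (rule real_sqrt_less_mono)
    then show ?thesis unfolding snorm_def using \<open>0 < e\<close> by simp
  qed
  then show "\<exists>N. \<forall>m\<ge>N. \<forall>n\<ge>N. snorm (x m - x n) < e" by blast
qed

lemma lim_fun_eq_0_if_quad_minimizing:
  assumes x: "snorm_Cauchy x" and lim: "(\<lambda>n. quad (x n)) \<longlonglongrightarrow> \<mu>" and z: "z \<in> D"
    and min: "\<And>n c. \<mu> \<le> quad (x n + scaleC c z)"
  shows "lim_fun x z = 0"
proof -
  define w where "w = lim_fun x z"
  have ge: "0 \<le> 2 * Re (cnj c * w) + (cmod c)\<^sup>2 * quad z" for c
  proof -
    have "(\<lambda>n. quad (x n + scaleC c z))
        \<longlonglongrightarrow> \<mu> + 2 * Re (cnj c * w) + (cmod c)\<^sup>2 * quad z"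
      unfolding w_def quad_add_scaleC[OF snorm_CauchyD[OF x] z]
      by (intro tendsto_add lim tendsto_const tendsto_mult tendsto_Re lim_fun_tendsto x z)
    then have "\<mu> \<le> \<mu> + 2 * Re (cnj c * w) + (cmod c)\<^sup>2 * quad z"
      using min by (intro LIMSEQ_le_const) auto
    then show ?thesis by simp
  qed
  define \<tau> where "\<tau> = 1 / (quad z + 1)"
  have \<tau>: "0 < \<tau>" "\<tau> * quad z < 1" using quad_nonneg[OF z] unfolding \<tau>_def by (auto simp: field_simps)
  have "0 \<le> 2 * Re (cnj (- (complex_of_real \<tau> * w)) * w) + (cmod (- (complex_of_real \<tau> * w)))\<^sup>2 * quad z"
    by (rule ge)
  also have "\<dots> = \<tau> * (cmod w)\<^sup>2 * (\<tau> * quad z - 2)"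
    by (simp add: norm_mult power_mult_distrib cmod_mult_self power2_eq_square algebra_simps)
  finally have "(cmod w)\<^sup>2 = 0"
    using \<tau> by (smt (verit) mult_pos_pos mult_pos_neg zero_le_power2)
  then show ?thesis unfolding w_def by simp
qed

lemma quad_minimizing_sequence:
  assumes "S \<noteq> {}" "S \<subseteq> D"
  obtains x where "\<And>n. x n \<in> S" "(\<lambda>n. quad (x n)) \<longlonglongrightarrow> Inf (quad ` S)"
proof -
  have "bdd_below (quad ` S)" using assms(2) quad_nonneg by (intro bdd_belowI[of _ 0]) auto
  then have "Inf (quad ` S) \<in> closure (quad ` S)"
    using assms(1) by (intro closure_contains_Inf) auto
  then obtain q where q: "\<And>n. q n \<in> quad ` S" "q \<longlonglongrightarrow> Inf (quad ` S)"
    unfolding closure_sequential by blast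
  have "\<forall>n. \<exists>x. x \<in> S \<and> quad x = q n"
    using q(1) unfolding image_iff by (blast intro: sym)
  from choice[OF this] obtain x where x: "\<And>n. x n \<in> S" and quad_x: "\<And>n. quad (x n) = q n"
    by blast
  have "(\<lambda>n. quad (x n)) \<longlonglongrightarrow> Inf (quad ` S)" using q(2) by (simp add: quad_x)
  with x show ?thesis by (rule that)
qed

context
  fixes \<phi> :: "'x \<Rightarrow> complex"
  assumes linear_add: "x \<in> D \<Longrightarrow> y \<in> D \<Longrightarrow> \<phi> (x + y) = \<phi> x + \<phi> y"
    and linear_scaleC: "x \<in> D \<Longrightarrow> \<phi> (scaleC c x) = c * \<phi> x"
begin

lemma cmod_le_snorm_if_small:
  assumes "0 < d" and small: "\<And>x. x \<in> D \<Longrightarrow> snorm x < d \<Longrightarrow> cmod (\<phi> x) < 1" and x: "x \<in> D"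
  shows "cmod (\<phi> x) \<le> 2 / d * snorm x"
proof (rule ccontr)
  assume "\<not> ?thesis"
  then have less: "2 / d * snorm x < cmod (\<phi> x)" by simp
  then have pos: "0 < cmod (\<phi> x)"
    using snorm_nonneg[OF x] \<open>0 < d\<close> by (smt (verit) divide_pos_pos mult_nonneg_nonneg)
  have "cmod (\<phi> (scaleC (1 / cmod (\<phi> x)) x)) = 1"
    using pos x by (simp add: linear_scaleC norm_mult norm_divide)
  then have "\<not> snorm (scaleC (1 / cmod (\<phi> x)) x) < d"
    using small[OF scaleC_mem[OF x], of "1 / cmod (\<phi> x)"] by linarith
  then have "d * cmod (\<phi> x) \<le> snorm x" using pos x by (simp add: snorm_scaleC norm_divide field_simps)
  then have "2 * cmod (\<phi> x) \<le> 2 / d * snorm x" using \<open>0 < d\<close> by (simp add: field_simps)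
  then show False using less pos by linarith
qed

lemma lim_fun_quad_minimizing_hyperplane:
  assumes x: "\<And>n. x n \<in> D" "\<And>n. \<phi> (x n) = 1"
    and lim: "(\<lambda>n. quad (x n)) \<longlonglongrightarrow> Inf (quad ` {x \<in> D. \<phi> x = 1})"
  shows "snorm_Cauchy x" "z \<in> D \<Longrightarrow> lim_fun x z = cnj (\<phi> z) * lim_fun x (x 0)"
proof -
  let ?\<mu> = "Inf (quad ` {x \<in> D. \<phi> x = 1})"
  have le_\<mu>: "?\<mu> \<le> quad y" if "y \<in> D" "\<phi> y = 1" for y
    using that quad_nonneg by (intro cInf_lower) (auto simp: bdd_below_def)
  show Cauchy: "snorm_Cauchy x"
  proof (rule snorm_Cauchy_if_quad_minimizing[OF x(1) _ lim])
    show "?\<mu> \<le> quad (scaleC (1/2) (x m + x n))" for m n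
      using x by (intro le_\<mu>) (auto simp: linear_scaleC linear_add add_mem)
  qed
  assume z: "z \<in> D"
  define y where "y = z + scaleC (- \<phi> z) (x 0)"
  have y: "y \<in> D" "\<phi> y = 0"
    using z x unfolding y_def by (simp_all add: add_mem scaleC_mem linear_add linear_scaleC)
  have "lim_fun x y = 0"
  proof (rule lim_fun_eq_0_if_quad_minimizing[OF Cauchy lim y(1)])
    show "?\<mu> \<le> quad (x n + scaleC c y)" for n c
      using x y by (intro le_\<mu>) (auto simp: linear_scaleC linear_add scaleC_mem)
  qed
  then show "lim_fun x z = cnj (\<phi> z) * lim_fun x (x 0)"
    using lim_fun_add_scaleC_right[OF Cauchy z x(1)] unfolding y_def by simp
qed

lemma Riesz_representation:
  assumes bounded: "\<And>x. x \<in> D \<Longrightarrow> cmod (\<phi> x) \<le> C * snorm x"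
  obtains t where "snorm_Cauchy t" "\<And>z. z \<in> D \<Longrightarrow> lim_fun t z = cnj (\<phi> z)"
proof (cases "\<forall>x\<in>D. \<phi> x = 0")
  case True
  then show ?thesis
    using that[OF snorm_Cauchy_const[OF zero_mem]] by (simp add: lim_fun_const)
next
  case False
  then obtain x0 where x0: "x0 \<in> D" "\<phi> x0 \<noteq> 0" by blast
  have "scaleC (1 / \<phi> x0) x0 \<in> {x \<in> D. \<phi> x = 1}" using x0 by (simp add: linear_scaleC scaleC_mem)
  then have S: "{x \<in> D. \<phi> x = 1} \<noteq> {}" "{x \<in> D. \<phi> x = 1} \<subseteq> D" by auto
  obtain x where "\<And>n. x n \<in> {x \<in> D. \<phi> x = 1}"
    and lim: "(\<lambda>n. quad (x n)) \<longlonglongrightarrow> Inf (quad ` {x \<in> D. \<phi> x = 1})"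
    using quad_minimizing_sequence[OF S] by blast
  then have x: "\<And>n. x n \<in> D" "\<And>n. \<phi> (x n) = 1" by auto
  note Cauchy = lim_fun_quad_minimizing_hyperplane(1)[OF x(1,2) lim]
  note lim_fun_x = lim_fun_quad_minimizing_hyperplane(2)[OF x(1,2) lim]
  define c where "c = lim_fun x (x 0)"
  have "c \<noteq> 0"
  proof
    assume "c = 0"
    \<comment> \<open>then \<open>quad (x n)\<close> tends to 0, contradicting \<open>1 = \<phi> (x n) \<le> C * snorm (x n)\<close>\<close>
    have "(\<lambda>n. lim_fun x (x n) - A (x n) (x n)) \<longlonglongrightarrow> 0"
      by (rule lim_form_diag_tendsto[OF Cauchy Cauchy])
    then have "(\<lambda>n. - (- A (x n) (x n))) \<longlonglongrightarrow> - 0"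
      using lim_fun_x x \<open>c = 0\<close> unfolding c_def by (intro tendsto_minus) simp
    then have "(\<lambda>n. sqrt (Re (A (x n) (x n)))) \<longlonglongrightarrow> sqrt (Re 0)"
      by (intro tendsto_real_sqrt tendsto_Re) simp
    then have "(\<lambda>n. C * snorm (x n)) \<longlonglongrightarrow> C * 0"
      unfolding snorm_def quad_def by (intro tendsto_mult tendsto_const) simp
    moreover have "1 \<le> C * snorm (x n)" for n using bounded[OF x(1)] x(2) by simp
    ultimately have "1 \<le> C * 0" by (intro LIMSEQ_le_const) auto
    then show False by simp
  qed
  show ?thesis
  proof (rule that)
    show "snorm_Cauchy (\<lambda>n. scaleC (1 / c) (x n))" by (rule snorm_Cauchy_scaleC[OF Cauchy])
    show "lim_fun (\<lambda>n. scaleC (1 / c) (x n)) z = cnj (\<phi> z)" if "z \<in> D" for z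
      using \<open>c \<noteq> 0\<close> lim_fun_x[OF that] unfolding lim_fun_scaleC[OF Cauchy] c_def by simp
  qed
qed

end

end

section \<open>Positive self-adjoint operators\<close>

locale positive_selfadjoint_operator =
  fixes D :: "'x::complex_normed_vector set" and A :: "'x \<Rightarrow> 'x \<Rightarrow> complex"
  assumes dd_operator: "dd_operator D A"
    and positive: "positive_op D A"
    and self_adjoint: "self_adjoint_op D A"

context positive_selfadjoint_operator
begin

lemma A_add:
  assumes "x \<in> D" "y \<in> D"
  shows "A (x + y) z = A x z + A y z"
proof -
  have "A (x + y) = (\<lambda>z. A x z + A y z)" using dd_operator assms unfolding dd_operator_def by blast
  then show ?thesis by simp
qed

lemma A_scaleC:
  assumes "x \<in> D"
  shows "A (scaleC c x) z = c * A x z"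
proof -
  have "A (scaleC c x) = (\<lambda>z. c * A x z)" using dd_operator assms unfolding dd_operator_def by blast
  then show ?thesis by simp
qed

lemma A_mem_cdual: "x \<in> D \<Longrightarrow> A x \<in> cdual"
  using dd_operator unfolding dd_operator_def by blast

end

sublocale positive_selfadjoint_operator \<subseteq> positive_hermitian_form D A
proof
  show "csubspace D" using dd_operator unfolding dd_operator_def by blast
  show "A (x + y) z = A x z + A y z" if "x \<in> D" "y \<in> D" for x y z
    using that by (rule A_add)
  show "A (scaleC c x) z = c * A x z" if "x \<in> D" for c x z
    using that by (rule A_scaleC)
  show "A x y = cnj (A y x)" if "x \<in> D" "y \<in> D" for x y
    using self_adjoint that unfolding self_adjoint_op_def by simp
  show "0 \<le> Re (A x x)" if "x \<in> D" for x
    using positive that unfolding positive_op_def by simp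
qed

context positive_selfadjoint_operator
begin

lemma A_zero [simp]: "A 0 z = 0"
  using A_scaleC[OF zero_mem, of 0 z] by simp

lemma A_diff_right:
  assumes "x \<in> D"
  shows "A x (y - z) = A x y - A x z"
proof -
  have "A x y = A x ((y - z) + z)" by simp
  also have "\<dots> = A x (y - z) + A x z"
    using A_mem_cdual[OF assms] unfolding cdual_def conj_linear_def by blast
  finally show ?thesis by simp
qed

lemma A_eq_if_emb_eq:
  assumes "x \<in> D" "x' \<in> D" "emb x = emb x'"
  shows "A x = A x'"
proof -
  have "continuous_on UNIV (\<lambda>z. A x z - A x' z)"
    using A_mem_cdual assms unfolding cdual_def by (intro continuous_on_diff) auto
  from continuous_closed_preimage_constant[OF this closed_UNIV, of 0]
  have "closed {z. A x z - A x' z = 0}" by simp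
  moreover have "D \<subseteq> {z. A x z - A x' z = 0}"
    using assms(3) unfolding emb_def by (auto simp: fun_eq_iff split: if_splits)
  ultimately have "closure D \<subseteq> {z. A x z - A x' z = 0}" by (rule closure_minimal[rotated])
  moreover have "closure D = UNIV" using dd_operator unfolding dd_operator_def by blast
  ultimately show ?thesis by (auto simp: fun_eq_iff)
qed

definition J :: "('x \<Rightarrow> complex) \<Rightarrow> 'x \<Rightarrow> complex" where
  "J f = A (inv_into D emb f)"

definition J_adj :: "'x \<Rightarrow> 'x \<Rightarrow> complex" where
  "J_adj y = (\<lambda>z. if z \<in> D then cnj (A z y) else 0)"

lemma J_emb: "x \<in> D \<Longrightarrow> J (emb x) = A x"
  unfolding J_def by (intro A_eq_if_emb_eq inv_into_into f_inv_into_f) (auto intro: imageI)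

lemma J_adj_eq_emb:
  assumes "y \<in> D"
  shows "J_adj y = emb y"
proof
  fix z show "J_adj y z = emb y z"
    unfolding J_adj_def emb_def using hermitian[OF assms, of z] by simp
qed

lemma dd_operator_H_J: "dd_operator_H completion completion_inner (emb ` D) J"
  unfolding dd_operator_H_def
proof (intro conjI ballI allI impI)
  show "emb ` D \<subseteq> completion" using emb_mem_completion by blast
  show "(\<lambda>_. 0) \<in> emb ` D" using imageI[OF zero_mem, of emb] by simp
  show "\<exists>g\<in>emb ` D. hdist h g < e" if "h \<in> completion" "0 < e" for h e
    using emb_dense[OF that] by blast
next
  fix f g assume "f \<in> emb ` D" "g \<in> emb ` D"
  then obtain x y where x: "x \<in> D" and y: "y \<in> D" and fg: "f = emb x" "g = emb y" by blast
  have sum: "(\<lambda>z. f z + g z) = emb (x + y)" unfolding fg using x y by (rule emb_add)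
  show "(\<lambda>z. f z + g z) \<in> emb ` D" unfolding sum using x y by (intro imageI add_mem)
  show "J (\<lambda>z. f z + g z) = (\<lambda>z. J f z + J g z)"
    unfolding sum unfolding fg using x y by (simp add: add_mem J_emb A_add fun_eq_iff)
next
  fix c f assume "f \<in> emb ` D"
  then obtain x where x: "x \<in> D" and f: "f = emb x" by blast
  have scaled: "(\<lambda>z. c * f z) = emb (scaleC c x)" unfolding f using x by (rule emb_scaleC)
  show "(\<lambda>z. c * f z) \<in> emb ` D" unfolding scaled using x by (intro imageI scaleC_mem)
  show "J (\<lambda>z. c * f z) = (\<lambda>z. c * J f z)"
    unfolding scaled unfolding f using x by (simp add: scaleC_mem J_emb A_scaleC fun_eq_iff)
next
  fix f assume "f \<in> emb ` D"
  then show "J f \<in> cdual" using J_emb A_mem_cdual by auto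
qed

lemma J_adj_adjoint:
  assumes y: "y \<in> adj_dom_H completion_inner (emb ` D) J"
  shows "J_adj y \<in> completion \<and> (\<forall>h\<in>emb ` D. completion_inner h (J_adj y) = J h y)"
proof -
  have "\<forall>h\<in>emb ` D. \<forall>e>0. \<exists>d>0. \<forall>g\<in>emb ` D. hdist g h < d \<longrightarrow> cmod (J g y - J h y) < e"
    using y unfolding adj_dom_H_def by (rule CollectD)
  from bspec[OF this imageI[OF zero_mem], rule_format, OF zero_less_one]
  obtain d where "0 < d"
    and d: "\<And>g. g \<in> emb ` D \<Longrightarrow> hdist g (emb 0) < d \<Longrightarrow> cmod (J g y - J (emb 0) y) < 1"
    by blast
  have small: "cmod (A x y) < 1" if "x \<in> D" "snorm x < d" for x
    using d[of "emb x"] hdist_emb[OF that(1) zero_mem] J_emb[OF that(1)] J_emb[OF zero_mem] that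
    by (simp del: emb_zero)
  have bounded: "cmod (A x y) \<le> 2 / d * snorm x" if "x \<in> D" for x
    using cmod_le_snorm_if_small[of "\<lambda>x. A x y" d x, OF A_add A_scaleC \<open>0 < d\<close> small that] .
  obtain t where t: "snorm_Cauchy t" and lim_t: "\<And>z. z \<in> D \<Longrightarrow> lim_fun t z = cnj (A z y)"
    using Riesz_representation[of "\<lambda>x. A x y", OF A_add A_scaleC bounded] by blast
  have "lim_fun t = J_adj y"
  proof
    fix z show "lim_fun t z = J_adj y z"
      using lim_t[of z] by (cases "z \<in> D") (simp_all add: J_adj_def lim_fun_def)
  qed
  moreover have "completion_inner (emb x) (lim_fun t) = J (emb x) y" if "x \<in> D" for x
    using completion_inner_emb_left[OF t that] lim_t[OF that] that by (simp add: J_emb)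
  ultimately show ?thesis using lim_fun_mem_completion[OF t] by auto
qed

lemma mem_adj_dom_H:
  assumes y: "y \<in> D"
  shows "y \<in> adj_dom_H completion_inner (emb ` D) J"
  unfolding adj_dom_H_def
proof (intro CollectI ballI allI impI)
  fix h :: "'x \<Rightarrow> complex" and e :: real assume "h \<in> emb ` D" "0 < e"
  then obtain x0 where x0: "x0 \<in> D" "h = emb x0" by blast
  define d where "d = e / (snorm y + 1)"
  have "0 < d" unfolding d_def using \<open>0 < e\<close> snorm_nonneg[OF y] by (intro divide_pos_pos) auto
  have "cmod (J g y - J h y) < e" if "g \<in> emb ` D" "hdist g h < d" for g
  proof -
    from that(1) obtain x where g: "g = emb x" and x: "x \<in> D" by (rule imageE)
    have close: "snorm (x - x0) < d" using that(2) unfolding g x0(2) hdist_emb[OF x x0(1)] .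
    have "cmod (J g y - J h y) = cmod (A (x - x0) y)"
      unfolding g x0(2) using x x0(1) y by (simp add: J_emb diff_left)
    also have "\<dots> \<le> snorm (x - x0) * snorm y" using x x0 y by (intro Cauchy_Schwarz_ineq diff_mem)
    also have "\<dots> \<le> d * snorm y" using close snorm_nonneg[OF y] by (intro mult_right_mono) auto
    also have "\<dots> < e" unfolding d_def using \<open>0 < e\<close> snorm_nonneg[OF y] by (simp add: field_simps)
    finally show ?thesis .
  qed
  then show "\<exists>d>0. \<forall>g\<in>emb ` D. hdist g h < d \<longrightarrow> cmod (J g y - J h y) < e"
    using \<open>0 < d\<close> by blast
qed

lemma mem_if_J_adj_mem:
  assumes "J_adj y \<in> emb ` D"
  shows "y \<in> D"
proof -
  obtain w where w: "w \<in> D" "J_adj y = emb w" using assms by blast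
  have "A z (y - w) = 0" if z: "z \<in> D" for z
  proof -
    have "cnj (A z y) = A w z" using fun_cong[OF w(2), of z] z unfolding J_adj_def emb_def by simp
    then have "A z y = A z w" using hermitian[OF w(1) z] by simp
    then show ?thesis using A_diff_right[OF z] by simp
  qed
  then have "continuous_on D (\<lambda>z. A z (y - w))" by (intro continuous_on_eq[OF continuous_on_const]) simp
  then have "y - w \<in> D" using self_adjoint unfolding self_adjoint_op_def adj_dom_def by blast
  from add_mem[OF this w(1)] show ?thesis by simp
qed

lemma dom_J_J_adj: "{y \<in> adj_dom_H completion_inner (emb ` D) J. J_adj y \<in> emb ` D} = D"
proof (intro equalityI subsetI)
  fix y assume "y \<in> {y \<in> adj_dom_H completion_inner (emb ` D) J. J_adj y \<in> emb ` D}"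
  then show "y \<in> D" using mem_if_J_adj_mem by blast
next
  fix y assume "y \<in> D"
  then show "y \<in> {y \<in> adj_dom_H completion_inner (emb ` D) J. J_adj y \<in> emb ` D}"
    by (simp add: mem_adj_dom_H J_adj_eq_emb)
qed

end

theorem lemma2:
  fixes D :: "'x::{complex_normed_vector, banach} set"
    and A :: "'x \<Rightarrow> ('x \<Rightarrow> complex)"
  assumes "reflexive_space TYPE('x)"
    and "dd_operator D A"
    and "positive_op D A"
    and "self_adjoint_op D A"
  shows "\<exists>(H :: ('x \<Rightarrow> complex) set) ip DJ (J :: ('x \<Rightarrow> complex) \<Rightarrow> ('x \<Rightarrow> complex)) Jstar.
           hilbert_space H ip \<and> dd_operator_H H ip DJ J \<and>
           (\<forall>y\<in>adj_dom_H ip DJ J. Jstar y \<in> H \<and> (\<forall>h\<in>DJ. ip h (Jstar y) = J h y)) \<and>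
           D = {y \<in> adj_dom_H ip DJ J. Jstar y \<in> DJ} \<and>
           (\<forall>y\<in>D. A y = J (Jstar y))"
proof -
  interpret positive_selfadjoint_operator D A using assms(2-4) by unfold_locales
  show ?thesis
  proof (intro exI conjI)
    show "hilbert_space completion completion_inner" by (rule hilbert_space_completion)
    show "dd_operator_H completion completion_inner (emb ` D) J" by (rule dd_operator_H_J)
    show "\<forall>y\<in>adj_dom_H completion_inner (emb ` D) J.
        J_adj y \<in> completion \<and> (\<forall>h\<in>emb ` D. completion_inner h (J_adj y) = J h y)"
      using J_adj_adjoint by blast
    show "D = {y \<in> adj_dom_H completion_inner (emb ` D) J. J_adj y \<in> emb ` D}"
      by (rule dom_J_J_adj[symmetric])
    show "\<forall>y\<in>D. A y = J (J_adj y)" by (simp add: J_adj_eq_emb J_emb)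
  qed
qed

end
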